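(* Let $H$ be a Kekul\'ean hexagonal system and $n\ge0$. The map $f$ from the set of Clar covers of $H$ with exactly $n$ hexagons to the set of induced subgraphs of $R(H)$ isomorphic to $Q_n$ is injective.
   Context: A hexagonal system is a 2-connected finite plane graph in which every interior face is a regular hexagon of side length one; its hexagons are the boundaries of its interior faces; it is Kekul\'ean if it has a perfect matching. A Clar cover of $H$ is a spanning subgraph each of whose components is a hexagon of $H$ or a single edge. The resonance graph $R(H)$ has the perfect matchings of $H$ as vertices, two adjacent iff their symmetric difference is the edge set of a hexagon of $H$. For a Clar cover $C$, $f(C)$ denotes the subgraph of $R(H)$ induced by all perfect matchings $M$ of $H$ such that every hexagon component of $C$ is $M$-alternating and every single-edge component of $C$ belongs to $M$; for $C$ with $n$ hexagons, $f(C)$ is an induced subgraph of $R(H)$ isomorphic to the $n$-cube $Q_n$. *)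

theory Defs
  imports Main
begin

text \<open>The hexagonal (honeycomb) lattice, in its standard brick-wall drawing.
Vertices are integer points; every horizontal unit segment is an edge and the
vertical unit segment from (x,y) to (x,y+1) is an edge iff x+y is even.
The bounded faces (cells) of this lattice are the 2-by-1 bricks whose lower-left
corner (x,y) has x+y even; each is a hexagon (6-cycle).  Up to a homeomorphism of
the plane this is exactly the regular hexagonal tiling with unit sides.\<close>

type_synonym vert = "int \<times> int"
type_synonym cell = "int \<times> int"

definition is_cell :: "cell \<Rightarrow> bool" where
  "is_cell c \<longleftrightarrow> even (fst c + snd c)"

definition cell_cycle :: "cell \<Rightarrow> vert list" where
  "cell_cycle c = (let x = fst c; y = snd c in
     [(x,y), (x+1,y), (x+2,y), (x+2,y+1), (x+1,y+1), (x,y+1)])"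

definition cell_verts :: "cell \<Rightarrow> vert set" where
  "cell_verts c = set (cell_cycle c)"

definition cell_edge :: "cell \<Rightarrow> nat \<Rightarrow> vert set" where
  "cell_edge c i = {cell_cycle c ! (i mod 6), cell_cycle c ! (Suc i mod 6)}"

definition cell_edges :: "cell \<Rightarrow> vert set set" where
  "cell_edges c = {cell_edge c i | i. i < 6}"

definition hs_verts :: "cell set \<Rightarrow> vert set" where
  "hs_verts S = (\<Union>c\<in>S. cell_verts c)"

definition hs_edges :: "cell set \<Rightarrow> vert set set" where
  "hs_edges S = (\<Union>c\<in>S. cell_edges c)"

text \<open>Graph connectivity and 2-connectivity (edges are 2-element vertex sets).\<close>
definition edge_rel :: "vert set set \<Rightarrow> (vert \<times> vert) set" where
  "edge_rel E = {(a,b). {a,b} \<in> E \<and> a \<noteq> b}"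

definition connected_graph :: "vert set \<Rightarrow> vert set set \<Rightarrow> bool" where
  "connected_graph V E \<longleftrightarrow>
     (\<forall>u\<in>V. \<forall>v\<in>V. (u,v) \<in> (edge_rel {e\<in>E. e \<subseteq> V})\<^sup>*)"

definition two_connected :: "vert set \<Rightarrow> vert set set \<Rightarrow> bool" where
  "two_connected V E \<longleftrightarrow> finite V \<and> card V \<ge> 3 \<and> connected_graph V E \<and>
     (\<forall>x\<in>V. connected_graph (V - {x}) {e\<in>E. x \<notin> e})"

definition cells_adj :: "cell \<Rightarrow> cell \<Rightarrow> bool" where
  "cells_adj c d \<longleftrightarrow> c \<noteq> d \<and> cell_edges c \<inter> cell_edges d \<noteq> {}"

text \<open>A hexagonal system, given by its set S of hexagons (interior faces).
The graph is 2-connected and every bounded face of it is one of the cells in S: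
equivalently the cells outside S form one edge-connected region (no holes).\<close>
definition hexagonal_system :: "cell set \<Rightarrow> bool" where
  "hexagonal_system S \<longleftrightarrow> finite S \<and> S \<noteq> {} \<and> (\<forall>c\<in>S. is_cell c) \<and>
     two_connected (hs_verts S) (hs_edges S) \<and>
     (\<forall>c d. is_cell c \<and> is_cell d \<and> c \<notin> S \<and> d \<notin> S \<longrightarrow>
        (c,d) \<in> {(a,b). is_cell a \<and> is_cell b \<and> a \<notin> S \<and> b \<notin> S \<and> cells_adj a b}\<^sup>*)"

definition perfect_matching :: "cell set \<Rightarrow> vert set set \<Rightarrow> bool" where
  "perfect_matching S M \<longleftrightarrow> M \<subseteq> hs_edges S \<and>
     (\<forall>v\<in>hs_verts S. \<exists>!e. e \<in> M \<and> v \<in> e)"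

definition kekulean :: "cell set \<Rightarrow> bool" where
  "kekulean S \<longleftrightarrow> (\<exists>M. perfect_matching S M)"

definition alternating :: "vert set set \<Rightarrow> cell \<Rightarrow> bool" where
  "alternating M h \<longleftrightarrow> (\<forall>i<6. cell_edge h i \<in> M \<longleftrightarrow> cell_edge h (Suc i) \<notin> M)"

definition comp :: "vert set set \<Rightarrow> vert \<Rightarrow> vert set" where
  "comp C v = {u. (v,u) \<in> (edge_rel C)\<^sup>*}"

definition comp_edges :: "vert set set \<Rightarrow> vert \<Rightarrow> vert set set" where
  "comp_edges C v = {e\<in>C. e \<subseteq> comp C v}"

definition clar_cover :: "cell set \<Rightarrow> vert set set \<Rightarrow> bool" where
  "clar_cover S C \<longleftrightarrow> C \<subseteq> hs_edges S \<and>
     (\<forall>v\<in>hs_verts S.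
        (\<exists>h\<in>S. comp C v = cell_verts h \<and> comp_edges C v = cell_edges h) \<or>
        (\<exists>a b. a \<noteq> b \<and> comp C v = {a,b} \<and> comp_edges C v = {{a,b}}))"

definition clar_hexagons :: "cell set \<Rightarrow> vert set set \<Rightarrow> cell set" where
  "clar_hexagons S C = {h\<in>S. \<exists>v\<in>hs_verts S.
      comp C v = cell_verts h \<and> comp_edges C v = cell_edges h}"

definition clar_single_edges :: "cell set \<Rightarrow> vert set set \<Rightarrow> vert set set" where
  "clar_single_edges S C = {e. \<exists>v\<in>hs_verts S. \<exists>a b. a \<noteq> b \<and> e = {a,b} \<and>
      comp C v = {a,b} \<and> comp_edges C v = {{a,b}}}"

definition res_adj :: "cell set \<Rightarrow> vert set set \<Rightarrow> vert set set \<Rightarrow> bool" where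
  "res_adj S M M' \<longleftrightarrow> perfect_matching S M \<and> perfect_matching S M' \<and>
     (\<exists>h\<in>S. (M - M') \<union> (M' - M) = cell_edges h)"

text \<open>f(C): induced subgraph of R(H), given as (vertex set, edge set).\<close>
definition f_verts :: "cell set \<Rightarrow> vert set set \<Rightarrow> vert set set set" where
  "f_verts S C = {M. perfect_matching S M \<and>
      (\<forall>h\<in>clar_hexagons S C. alternating M h) \<and>
      (\<forall>e\<in>clar_single_edges S C. e \<in> M)}"

definition f_map :: "cell set \<Rightarrow> vert set set \<Rightarrow>
    vert set set set \<times> (vert set set \<times> vert set set) set" where
  "f_map S C = (f_verts S C,
      {(M, M'). M \<in> f_verts S C \<and> M' \<in> f_verts S C \<and> res_adj S M M'})"

end

theory Submission
  imports Defs
begin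

text \<open>A Clar cover C is recovered from f(C) as the union of the perfect matchings
in f(C).  Every such matching lies in C: at a vertex of a Clar hexagon the matching
edge is one of the two alternating hexagon edges, and at a vertex of a single-edge
component it is that edge.  Conversely, choosing independently for every Clar
hexagon either its even or its odd edges, and adding all single-edge components,
gives a matching in f(C); with suitable choices it contains any prescribed edge of C.
The argument works for a Clar cover of any set of cells.\<close>

lemma six_cases: "(i::nat) < 6 \<Longrightarrow> i = 0 \<or> i = 1 \<or> i = 2 \<or> i = 3 \<or> i = 4 \<or> i = 5"
  by arith

lemma even_Suc_mod_6: "(i::nat) < 6 \<Longrightarrow> even (Suc i mod 6) \<longleftrightarrow> odd i"
  by (drule six_cases) auto

lemma length_cell_cycle: "length (cell_cycle h) = 6"
  by (simp add: cell_cycle_def Let_def)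

lemma card_cell_verts: "card (cell_verts h) = 6"
  by (cases h) (simp add: cell_verts_def cell_cycle_def)

lemma cell_verts_inject: "cell_verts h = cell_verts h' \<Longrightarrow> h = h'"
proof -
  assume eq: "cell_verts h = cell_verts h'"
  have own_corner: "c \<in> cell_verts c" for c :: cell
    by (cases c) (simp add: cell_verts_def cell_cycle_def)
  have "h \<in> cell_verts h'" "h' \<in> cell_verts h"
    using own_corner eq by metis+
  then show ?thesis
    by (cases h, cases h') (auto simp: cell_verts_def cell_cycle_def)
qed

lemma cell_edge_mod_6: "cell_edge h (i mod 6) = cell_edge h i"
  by (simp add: cell_edge_def mod_Suc_eq)

lemma cell_edge_inject: "i < 6 \<Longrightarrow> j < 6 \<Longrightarrow> cell_edge h i = cell_edge h j \<Longrightarrow> i = j"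
  by (cases h, drule six_cases, drule six_cases)
     (elim disjE; simp add: cell_edge_def cell_cycle_def doubleton_eq_iff)

lemma cell_edge_same_parity_disjoint:
  "i < 6 \<Longrightarrow> j < 6 \<Longrightarrow> even i = even j \<Longrightarrow> v \<in> cell_edge h i \<Longrightarrow> v \<in> cell_edge h j \<Longrightarrow> i = j"
  by (cases h, drule six_cases, drule six_cases)
     (elim disjE; auto simp add: cell_edge_def cell_cycle_def)

lemma cell_edge_subset_cell_verts: "cell_edge h i \<subseteq> cell_verts h"
  using length_cell_cycle by (auto simp: cell_edge_def cell_verts_def intro!: nth_mem)

lemma cell_edge_in_cell_edges: "cell_edge h i \<in> cell_edges h"
  unfolding cell_edges_def by (rule CollectI, rule exI[of _ "i mod 6"]) (simp add: cell_edge_mod_6)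

lemma cell_vert_in_consecutive_edges:
  assumes "v \<in> cell_verts h"
  obtains i where "i < 6" "v \<in> cell_edge h i" "v \<in> cell_edge h (Suc i)"
proof -
  obtain k where k: "k < 6" "v = cell_cycle h ! k"
    using assms length_cell_cycle by (auto simp: cell_verts_def in_set_conv_nth)
  have "Suc ((k + 5) mod 6) mod 6 = k" using k(1) by presburger
  then show ?thesis
    using that[of "(k + 5) mod 6"] k by (simp add: cell_edge_def)
qed

lemma hs_edges_doubleton: "e \<in> hs_edges S \<Longrightarrow> \<exists>p q. e = {p,q}"
  unfolding hs_edges_def cell_edges_def cell_edge_def by blast

lemma hs_edges_subset_hs_verts: "e \<in> hs_edges S \<Longrightarrow> e \<subseteq> hs_verts S"
  using cell_edge_subset_cell_verts by (fastforce simp: hs_edges_def cell_edges_def hs_verts_def)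

lemma in_comp_self: "v \<in> comp C v"
  by (simp add: comp_def)

lemma comp_eq_if_common: "x \<in> comp C v \<Longrightarrow> x \<in> comp C w \<Longrightarrow> comp C v = comp C w"
proof -
  assume "x \<in> comp C v" "x \<in> comp C w"
  then have vx: "(v,x) \<in> (edge_rel C)\<^sup>*" and wx: "(w,x) \<in> (edge_rel C)\<^sup>*"
    by (simp_all add: comp_def)
  have "sym ((edge_rel C)\<^sup>*)"
    by (rule sym_rtrancl) (auto simp: sym_def edge_rel_def insert_commute)
  then have "(x,v) \<in> (edge_rel C)\<^sup>*" "(x,w) \<in> (edge_rel C)\<^sup>*"
    using vx wx by (auto dest: symD)
  then have "(v,w) \<in> (edge_rel C)\<^sup>*" "(w,v) \<in> (edge_rel C)\<^sup>*"
    using vx wx by (meson rtrancl_trans)+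
  then show ?thesis
    unfolding comp_def by (meson rtrancl_trans)
qed

lemma edge_subset_comp:
  assumes "{p,q} \<in> C" "v \<in> {p,q}"
  shows "{p,q} \<subseteq> comp C v"
proof -
  have "(p,q) \<in> (edge_rel C)\<^sup>*" "(q,p) \<in> (edge_rel C)\<^sup>*"
    using assms(1) by (cases "p = q"; auto simp: edge_rel_def insert_commute)+
  then show ?thesis
    using assms(2) by (auto simp: comp_def)
qed

lemma comp_edges_subset: "comp_edges C v \<subseteq> C"
  by (auto simp: comp_edges_def)

definition clar_matching :: "cell set \<Rightarrow> vert set set \<Rightarrow> (cell \<Rightarrow> bool) \<Rightarrow> vert set set" where
  "clar_matching S C p = clar_single_edges S C \<union>
     (\<Union>h\<in>clar_hexagons S C. {cell_edge h i | i. i < 6 \<and> even i = p h})"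

context
  fixes S C assumes clar: "clar_cover S C"
begin

lemma clar_single_edges_subset: "clar_single_edges S C \<subseteq> C"
  using comp_edges_subset by (fastforce simp: clar_single_edges_def)

lemma clar_hexagonsD:
  assumes "h \<in> clar_hexagons S C"
  shows "cell_edges h \<subseteq> C" and "\<exists>v. comp C v = cell_verts h"
  using assms comp_edges_subset by (fastforce simp: clar_hexagons_def)+

lemma clar_component_cases:
  assumes v: "v \<in> hs_verts S"
  obtains h where "h \<in> clar_hexagons S C" "comp C v = cell_verts h" "comp_edges C v = cell_edges h"
  | a b where "comp C v = {a,b}" "comp_edges C v = {{a,b}}" "{a,b} \<in> clar_single_edges S C"
proof -
  from clar v consider h where "h \<in> S" "comp C v = cell_verts h" "comp_edges C v = cell_edges h"
    | a b where "a \<noteq> b" "comp C v = {a,b}" "comp_edges C v = {{a,b}}"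
    unfolding clar_cover_def by blast
  then show ?thesis
  proof cases
    case (1 h)
    then have "h \<in> clar_hexagons S C" using v unfolding clar_hexagons_def by blast
    with 1 that(1) show ?thesis by blast
  next
    case (2 a b)
    then have "{a,b} \<in> clar_single_edges S C" using v unfolding clar_single_edges_def by blast
    with 2 that(2) show ?thesis by blast
  qed
qed

lemma clar_hexagon_single_edge_disjoint:
  assumes "h \<in> clar_hexagons S C" "e \<in> clar_single_edges S C"
  shows "cell_verts h \<inter> e = {}"
proof (rule ccontr)
  assume "cell_verts h \<inter> e \<noteq> {}"
  then obtain x where x: "x \<in> cell_verts h" "x \<in> e" by blast
  obtain v where v: "comp C v = cell_verts h" using clar_hexagonsD(2)[OF assms(1)] by blast
  obtain w a b where w: "comp C w = {a,b}" "e = {a,b}"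
    using assms(2) by (auto simp: clar_single_edges_def)
  have "cell_verts h = {a,b}" using comp_eq_if_common[of x C v w] x v w by simp
  moreover have "card {a,b} \<le> 2" by (cases "a = b") auto
  ultimately have "card (cell_verts h) \<le> 2" by simp
  then show False by (simp add: card_cell_verts)
qed

lemma clar_hexagons_disjoint:
  assumes "h \<in> clar_hexagons S C" "h' \<in> clar_hexagons S C" "x \<in> cell_verts h" "x \<in> cell_verts h'"
  shows "h = h'"
proof -
  obtain v w where "comp C v = cell_verts h" "comp C w = cell_verts h'"
    using clar_hexagonsD(2) assms(1,2) by metis
  then show ?thesis using comp_eq_if_common[of x C v w] assms(3,4) cell_verts_inject by simp
qed

lemma clar_single_edges_disjoint:
  assumes "e \<in> clar_single_edges S C" "e' \<in> clar_single_edges S C" "x \<in> e" "x \<in> e'"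
  shows "e = e'"
proof -
  obtain v w where "comp C v = e" "comp C w = e'"
    using assms(1,2) by (auto simp: clar_single_edges_def)
  then show ?thesis using comp_eq_if_common[of x C v w] assms(3,4) by simp
qed

lemma clar_matching_cases:
  assumes "e \<in> clar_matching S C p"
  obtains "e \<in> clar_single_edges S C"
  | h i where "h \<in> clar_hexagons S C" "i < 6" "even i = p h" "e = cell_edge h i"
  using assms unfolding clar_matching_def by blast

lemma cell_edge_in_clar_matching_iff:
  assumes h: "h \<in> clar_hexagons S C" and j: "j < 6"
  shows "cell_edge h j \<in> clar_matching S C p \<longleftrightarrow> even j = p h"
proof
  assume "cell_edge h j \<in> clar_matching S C p"
  moreover obtain x where x: "x \<in> cell_edge h j"
    unfolding cell_edge_def by blast
  ultimately show "even j = p h"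
  proof (cases rule: clar_matching_cases)
    case 1
    then show ?thesis
      using clar_hexagon_single_edge_disjoint[OF h] x cell_edge_subset_cell_verts by blast
  next
    case (2 h' i)
    have "h = h'"
      using clar_hexagons_disjoint[OF h 2(1), of x] x 2(4) cell_edge_subset_cell_verts by blast
    with 2 show ?thesis using cell_edge_inject[OF j 2(2), of h] by simp
  qed
qed (use assms in \<open>auto simp: clar_matching_def\<close>)

lemma clar_matching_subset: "clar_matching S C p \<subseteq> C"
  using clar_single_edges_subset clar_hexagonsD(1) cell_edge_in_cell_edges
  unfolding clar_matching_def by blast

lemma clar_matching_covers:
  assumes v: "v \<in> hs_verts S"
  shows "\<exists>e. e \<in> clar_matching S C p \<and> v \<in> e"
  using v
proof (cases rule: clar_component_cases)
  case (1 h)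
  then obtain i where i: "i < 6" "v \<in> cell_edge h i" "v \<in> cell_edge h (Suc i)"
    using cell_vert_in_consecutive_edges in_comp_self by metis
  show ?thesis
  proof (cases "even i = p h")
    case True
    then show ?thesis using cell_edge_in_clar_matching_iff[OF 1(1) i(1)] i by blast
  next
    case False
    then have "cell_edge h (Suc i mod 6) \<in> clar_matching S C p"
      using cell_edge_in_clar_matching_iff[OF 1(1)] even_Suc_mod_6[OF i(1)] by simp
    then show ?thesis using i cell_edge_mod_6 by metis
  qed
next
  case (2 a b)
  then show ?thesis using in_comp_self[of v C] unfolding clar_matching_def by blast
qed

lemma clar_matching_unique:
  assumes e: "e \<in> clar_matching S C p" "v \<in> e" and e': "e' \<in> clar_matching S C p" "v \<in> e'"
  shows "e = e'"
  using e(1)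
proof (cases rule: clar_matching_cases)
  case single: 1
  from e'(1) show ?thesis
  proof (cases rule: clar_matching_cases)
    case 1
    then show ?thesis using clar_single_edges_disjoint single e(2) e'(2) by blast
  next
    case (2 h i)
    then show ?thesis
      using clar_hexagon_single_edge_disjoint[OF 2(1) single] e(2) e'(2) cell_edge_subset_cell_verts
      by blast
  qed
next
  case hex: (2 h i)
  from e'(1) show ?thesis
  proof (cases rule: clar_matching_cases)
    case 1
    then show ?thesis
      using clar_hexagon_single_edge_disjoint[OF hex(1) 1] e(2) e'(2) hex(4) cell_edge_subset_cell_verts
      by blast
  next
    case (2 h' i')
    have "h = h'"
      using clar_hexagons_disjoint[OF hex(1) 2(1), of v] e(2) e'(2) hex(4) 2(4)
        cell_edge_subset_cell_verts by blast
    then show ?thesis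
      using cell_edge_same_parity_disjoint[OF hex(2) 2(2), of v h] hex 2 e(2) e'(2) by simp
  qed
qed

lemma clar_matching_in_f_verts: "clar_matching S C p \<in> f_verts S C"
proof -
  have "perfect_matching S (clar_matching S C p)"
    unfolding perfect_matching_def
  proof (intro conjI ballI)
    show "clar_matching S C p \<subseteq> hs_edges S"
      using clar_matching_subset clar by (auto simp: clar_cover_def)
    show "\<exists>!e. e \<in> clar_matching S C p \<and> v \<in> e" if "v \<in> hs_verts S" for v
      using clar_matching_covers[OF that] clar_matching_unique by blast
  qed
  moreover have "alternating (clar_matching S C p) h" if h: "h \<in> clar_hexagons S C" for h
    unfolding alternating_def
  proof (intro allI impI)
    fix i :: nat assume i: "i < 6"
    show "cell_edge h i \<in> clar_matching S C p \<longleftrightarrow> cell_edge h (Suc i) \<notin> clar_matching S C p"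
      using cell_edge_in_clar_matching_iff[OF h i] cell_edge_in_clar_matching_iff[OF h, of "Suc i mod 6"]
        even_Suc_mod_6[OF i] cell_edge_mod_6[of h "Suc i"] by auto
  qed
  ultimately show ?thesis
    unfolding f_verts_def by (auto simp: clar_matching_def)
qed

lemma f_vert_edge_in_clar_cover:
  assumes M: "M \<in> f_verts S C" and e: "e \<in> M"
  shows "e \<in> C"
proof -
  have pm: "perfect_matching S M" and alt: "\<forall>h\<in>clar_hexagons S C. alternating M h"
    and single: "clar_single_edges S C \<subseteq> M"
    using M by (auto simp: f_verts_def)
  have ehs: "e \<in> hs_edges S" using pm e by (auto simp: perfect_matching_def)
  obtain p q where pq: "e = {p,q}" using hs_edges_doubleton[OF ehs] by blast
  have p: "p \<in> hs_verts S" using hs_edges_subset_hs_verts[OF ehs] pq by auto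
  have unique: "e' = e" if "e' \<in> M" "p \<in> e'" for e'
    using pm p e pq that unfolding perfect_matching_def by blast
  from p show "e \<in> C"
  proof (cases rule: clar_component_cases)
    case (1 h)
    then obtain i where i: "i < 6" "p \<in> cell_edge h i" "p \<in> cell_edge h (Suc i)"
      using cell_vert_in_consecutive_edges in_comp_self by metis
    have "cell_edge h i \<in> M \<or> cell_edge h (Suc i) \<in> M"
      using alt 1(1) i(1) unfolding alternating_def by blast
    then have "e \<in> cell_edges h" using unique i cell_edge_in_cell_edges by metis
    then show ?thesis using clar_hexagonsD(1)[OF 1(1)] by blast
  next
    case (2 a b)
    then have "e = {a,b}" using single unique in_comp_self[of p C] by auto
    then show ?thesis using clar_single_edges_subset 2(3) by blast
  qed
qed

lemma edge_in_some_f_vert: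
  assumes e: "e \<in> C"
  shows "\<exists>M\<in>f_verts S C. e \<in> M"
proof -
  have ehs: "e \<in> hs_edges S" using e clar by (auto simp: clar_cover_def)
  obtain p q where pq: "e = {p,q}" using hs_edges_doubleton[OF ehs] by blast
  have p: "p \<in> hs_verts S" using hs_edges_subset_hs_verts[OF ehs] pq by auto
  have ep: "e \<in> comp_edges C p" using edge_subset_comp[of p q C p] e pq by (simp add: comp_edges_def)
  from p show ?thesis
  proof (cases rule: clar_component_cases)
    case (1 h)
    then obtain i where "i < 6" "e = cell_edge h i" using ep by (auto simp: cell_edges_def)
    then have "e \<in> clar_matching S C (\<lambda>_. even i)"
      using cell_edge_in_clar_matching_iff[OF 1(1)] by simp
    then show ?thesis using clar_matching_in_f_verts by blast
  next
    case (2 a b)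
    then have "e \<in> clar_matching S C (\<lambda>_. True)" using ep by (simp add: clar_matching_def)
    then show ?thesis using clar_matching_in_f_verts by blast
  qed
qed

lemma Union_f_verts: "\<Union> (f_verts S C) = C"
  using f_vert_edge_in_clar_cover edge_in_some_f_vert by blast

end

theorem lemma2:
  fixes S :: "cell set" and n :: nat
  assumes "hexagonal_system S" and "kekulean S"
  shows "inj_on (f_map S) {C. clar_cover S C \<and> card (clar_hexagons S C) = n}"
proof (rule inj_onI)
  fix C C' assume "C \<in> {C. clar_cover S C \<and> card (clar_hexagons S C) = n}"
    and "C' \<in> {C. clar_cover S C \<and> card (clar_hexagons S C) = n}"
    and "f_map S C = f_map S C'"
  then have "clar_cover S C" "clar_cover S C'" "f_verts S C = f_verts S C'"
    by (auto simp: f_map_def dest: arg_cong[of _ _ fst])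
  then show "C = C'" using Union_f_verts by metis
qed

end
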